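(* Let $d\ge 1$ and let $\mathbf{X}=(X_1,\dots,X_d)$ and $\mathbf{Y}=(Y_1,\dots,Y_d)$ be random vectors on $\mathbb{R}^d$ with distribution functions $F$ and $G$, each satisfying condition $(\mathcal{H})$. Then $F=G$ if and only if $\|\mathbf{x}\|_{\mathbf{X}}=\|\mathbf{x}\|_{\mathbf{Y}}$ for all $\mathbf{x}\in\mathbb{R}^{d+1}$.
   Context: Condition $(\mathcal{H})$ on a random vector $\mathbf{X}=(X_1,\dots,X_d)$: each $X_i$ is almost surely nonnegative with $0<E(X_i)<\infty$. For such $\mathbf{X}$ and $\mathbf{x}=(x_0,x_1,\dots,x_d)\in\mathbb{R}^{d+1}$, define $\|\mathbf{x}\|_{\mathbf{X}}:=E\big(\max(|x_0|,|x_1|X_1,\dots,|x_d|X_d)\big)$. *)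

theory Defs
  imports "HOL-Probability.Probability"
begin

text \<open>A random vector X = (X_1,...,X_d) on a probability space M is represented by
  its components X i, i \<in> {1..d}.\<close>
definition cond_H :: "'a measure \<Rightarrow> (nat \<Rightarrow> 'a \<Rightarrow> real) \<Rightarrow> nat \<Rightarrow> bool" where
  "cond_H M X d \<longleftrightarrow>
     (\<forall>i\<in>{1..d}. X i \<in> borel_measurable M \<and> (AE \<omega> in M. 0 \<le> X i \<omega>)
        \<and> integrable M (X i) \<and> 0 < (\<integral>\<omega>. X i \<omega> \<partial>M))"

definition joint_cdf :: "'a measure \<Rightarrow> (nat \<Rightarrow> 'a \<Rightarrow> real) \<Rightarrow> nat \<Rightarrow> (nat \<Rightarrow> real) \<Rightarrow> real" where
  "joint_cdf M X d t = measure M {\<omega> \<in> space M. \<forall>i\<in>{1..d}. X i \<omega> \<le> t i}"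

definition normX :: "'a measure \<Rightarrow> (nat \<Rightarrow> 'a \<Rightarrow> real) \<Rightarrow> nat \<Rightarrow> (nat \<Rightarrow> real) \<Rightarrow> real" where
  "normX M X d x = (\<integral>\<omega>. Max ({\<bar>x 0\<bar>} \<union> {\<bar>x i\<bar> * X i \<omega> | i. i \<in> {1..d}}) \<partial>M)"

end

theory Submission
  imports Defs
begin

text \<open>
  Fix t with positive entries and put Z = max_i X_i / t_i, so that F(t) = P(Z \<le> 1) and
  \<parallel>(c, 1/t_1, ..., 1/t_d)\<parallel>_X = E max(c, Z). For h > 0 the increment
  E max(c + h, Z) - E max(c, Z) lies between h P(Z \<le> c) and h P(Z \<le> c + h); hence the
  norms determine P(Z \<le> c) for c > 0 by right continuity, and so F on the positive orthant.
  Right continuity of F and the almost sure nonnegativity of the X_i extend this to all of \<real>^d.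
  Conversely, \<parallel>x\<parallel>_X is the mean of W = max(|x_0|, |x_1| X_1, ..., |x_d| X_d), and every
  P(W \<le> s) is a limit of values of F, so F determines the law of W and thus its mean.
\<close>

lemma
  assumes "cond_H M X d" and "i \<in> {1..d}"
  shows cond_H_measurable: "X i \<in> borel_measurable M"
    and cond_H_integrable: "integrable M (X i)"
    and cond_H_AE_nonneg: "AE \<omega> in M. 0 \<le> X i \<omega>"
  using assms by (auto simp: cond_H_def)

definition orthant_event :: "'a measure \<Rightarrow> (nat \<Rightarrow> 'a \<Rightarrow> real) \<Rightarrow> nat \<Rightarrow> (nat \<Rightarrow> real) \<Rightarrow> 'a set" where
  "orthant_event M X d t = {\<omega> \<in> space M. \<forall>i\<in>{1..d}. X i \<omega> \<le> t i}"

lemma joint_cdf_eq_measure_orthant_event: "joint_cdf M X d t = measure M (orthant_event M X d t)"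
  by (simp add: joint_cdf_def orthant_event_def)

lemma orthant_event_in_sets:
  assumes "\<And>i. i \<in> {1..d} \<Longrightarrow> X i \<in> borel_measurable M"
  shows "orthant_event M X d t \<in> sets M"
  unfolding orthant_event_def
proof (rule sets.sets_Collect_finite_All)
  fix i assume "i \<in> {1..d}"
  then have [measurable]: "X i \<in> borel_measurable M" by (rule assms)
  show "{\<omega> \<in> space M. X i \<omega> \<le> t i} \<in> sets M" by measurable
qed simp

lemma orthant_event_mono:
  "(\<And>i. i \<in> {1..d} \<Longrightarrow> s i \<le> t i) \<Longrightarrow> orthant_event M X d s \<subseteq> orthant_event M X d t"
  by (auto simp: orthant_event_def intro: order_trans)

lemma (in finite_measure) joint_cdf_continuous_from_above:
  assumes meas: "\<And>i. i \<in> {1..d} \<Longrightarrow> X i \<in> borel_measurable M"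
    and dec: "\<And>n i. i \<in> {1..d} \<Longrightarrow> s (Suc n) i \<le> s n i"
    and lim: "\<And>i. i \<in> {1..d} \<Longrightarrow> (\<lambda>n. s n i) \<longlonglongrightarrow> t i"
  shows "(\<lambda>n. joint_cdf M X d (s n)) \<longlonglongrightarrow> joint_cdf M X d t"
proof -
  have "t i \<le> s n i" if "i \<in> {1..d}" for i n
    using decseq_ge[OF _ lim[OF that]] dec[OF that] by (simp add: decseq_Suc_iff)
  then have "(\<Inter>n. orthant_event M X d (s n)) = orthant_event M X d t"
    by (auto simp: orthant_event_def intro: order_trans LIMSEQ_le_const[OF lim])
  moreover have "(\<lambda>n. measure M (orthant_event M X d (s n)))
      \<longlonglongrightarrow> measure M (\<Inter>n. orthant_event M X d (s n))"
    using meas dec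
    by (intro finite_Lim_measure_decseq decseq_SucI orthant_event_mono) (auto intro: orthant_event_in_sets)
  ultimately show ?thesis by (simp add: joint_cdf_eq_measure_orthant_event)
qed

lemma joint_cdf_eq_0_if_negative:
  assumes "AE \<omega> in M. 0 \<le> X i \<omega>" and "i \<in> {1..d}" and "t i < 0"
  shows "joint_cdf M X d t = 0"
proof -
  have "AE \<omega> in M. \<not> (\<forall>i\<in>{1..d}. X i \<omega> \<le> t i)"
    using assms(1) by eventually_elim (use assms(2,3) in force)
  then have "emeasure M {\<omega>\<in>space M. \<forall>i\<in>{1..d}. X i \<omega> \<le> t i} = 0"
    by (rule emeasure_eq_0_AE)
  then show ?thesis by (simp add: joint_cdf_def measure_def)
qed

definition weighted_max :: "(nat \<Rightarrow> 'a \<Rightarrow> real) \<Rightarrow> nat \<Rightarrow> (nat \<Rightarrow> real) \<Rightarrow> 'a \<Rightarrow> real" where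
  "weighted_max X d x \<omega> = Max ((\<lambda>i. \<bar>x i\<bar> * X i \<omega>) ` {1..d})"

lemma weighted_max_fun_upd_0 [simp]: "weighted_max X d (x(0 := c)) = weighted_max X d x"
  unfolding weighted_max_def by (intro ext arg_cong[where f = Max] image_cong) auto

lemma normX_eq_integral_weighted_max:
  assumes "d \<ge> 1"
  shows "normX M X d x = (\<integral>\<omega>. max \<bar>x 0\<bar> (weighted_max X d x \<omega>) \<partial>M)"
proof -
  have "{\<bar>x i\<bar> * X i \<omega> | i. i \<in> {1..d}} = (\<lambda>i. \<bar>x i\<bar> * X i \<omega>) ` {1..d}" for \<omega>
    by auto
  then show ?thesis
    using assms by (simp add: normX_def weighted_max_def)
qed

lemma weighted_max_le_iff:
  assumes "d \<ge> 1"
  shows "weighted_max X d x \<omega> \<le> s \<longleftrightarrow> (\<forall>i\<in>{1..d}. \<bar>x i\<bar> * X i \<omega> \<le> s)"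
  using assms by (simp add: weighted_max_def)

lemma weighted_max_ge: "i \<in> {1..d} \<Longrightarrow> \<bar>x i\<bar> * X i \<omega> \<le> weighted_max X d x \<omega>"
  by (simp add: weighted_max_def)

lemma borel_measurable_weighted_max [measurable]:
  assumes "\<And>i. i \<in> {1..d} \<Longrightarrow> X i \<in> borel_measurable M"
  shows "weighted_max X d x \<in> borel_measurable M"
  unfolding weighted_max_def
proof (rule borel_measurable_Max)
  fix i assume "i \<in> {1..d}"
  then have [measurable]: "X i \<in> borel_measurable M" by (rule assms)
  show "(\<lambda>\<omega>. \<bar>x i\<bar> * X i \<omega>) \<in> borel_measurable M" by measurable
qed simp

lemma integrable_weighted_max:
  assumes d: "d \<ge> 1" and int: "\<And>i. i \<in> {1..d} \<Longrightarrow> integrable M (X i)"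
  shows "integrable M (weighted_max X d x)"
proof (rule Bochner_Integration.integrable_bound)
  show "integrable M (\<lambda>\<omega>. \<Sum>i\<in>{1..d}. \<bar>x i\<bar> * \<bar>X i \<omega>\<bar>)"
    using int by (intro Bochner_Integration.integrable_sum integrable_mult_right integrable_abs) auto
  show "weighted_max X d x \<in> borel_measurable M"
    using int by (intro borel_measurable_weighted_max) auto
  show "AE \<omega> in M. norm (weighted_max X d x \<omega>) \<le> norm (\<Sum>i\<in>{1..d}. \<bar>x i\<bar> * \<bar>X i \<omega>\<bar>)"
  proof (rule AE_I2)
    fix \<omega>
    have term_le_sum: "\<bar>x i\<bar> * \<bar>X i \<omega>\<bar> \<le> (\<Sum>i\<in>{1..d}. \<bar>x i\<bar> * \<bar>X i \<omega>\<bar>)" if "i \<in> {1..d}" for i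
      using that by (intro member_le_sum) auto
    have "\<bar>x i\<bar> * X i \<omega> \<le> \<bar>x i\<bar> * \<bar>X i \<omega>\<bar>" for i
      by (intro mult_left_mono) auto
    then have "weighted_max X d x \<omega> \<le> (\<Sum>i\<in>{1..d}. \<bar>x i\<bar> * \<bar>X i \<omega>\<bar>)"
      unfolding weighted_max_le_iff[OF d] using term_le_sum order_trans by blast
    moreover have "- (\<Sum>i\<in>{1..d}. \<bar>x i\<bar> * \<bar>X i \<omega>\<bar>) \<le> weighted_max X d x \<omega>"
      using d term_le_sum[of 1] weighted_max_ge[of 1 d x X \<omega>]
        abs_ge_minus_self[of "\<bar>x 1\<bar> * X 1 \<omega>"]
      by (simp add: abs_mult)
    ultimately show "norm (weighted_max X d x \<omega>) \<le> norm (\<Sum>i\<in>{1..d}. \<bar>x i\<bar> * \<bar>X i \<omega>\<bar>)"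
      by (simp add: abs_le_iff sum_nonneg)
  qed
qed

lemma (in finite_measure) integral_max_increment_bounds:
  fixes Z :: "'a \<Rightarrow> real"
  assumes Z: "integrable M Z" and h: "0 \<le> h"
  shows "h * measure M {\<omega>\<in>space M. Z \<omega> \<le> c}
           \<le> (\<integral>\<omega>. max (c + h) (Z \<omega>) \<partial>M) - (\<integral>\<omega>. max c (Z \<omega>) \<partial>M)"
    and "(\<integral>\<omega>. max (c + h) (Z \<omega>) \<partial>M) - (\<integral>\<omega>. max c (Z \<omega>) \<partial>M)
           \<le> h * measure M {\<omega>\<in>space M. Z \<omega> \<le> c + h}"
proof -
  have [measurable]: "Z \<in> borel_measurable M" using Z by auto
  have diff: "(\<integral>\<omega>. max (c + h) (Z \<omega>) \<partial>M) - (\<integral>\<omega>. max c (Z \<omega>) \<partial>M)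
      = (\<integral>\<omega>. max (c + h) (Z \<omega>) - max c (Z \<omega>) \<partial>M)"
    using Z by simp
  have sets: "{\<omega>\<in>space M. Z \<omega> \<le> a} \<in> sets M" for a
    by measurable
  have indicator_integrable: "integrable M (indicator {\<omega>\<in>space M. Z \<omega> \<le> a} :: 'a \<Rightarrow> real)" for a
    using sets by (intro integrable_real_indicator) (auto simp: less_top[symmetric])
  have indicator: "h * measure M {\<omega>\<in>space M. Z \<omega> \<le> a}
      = (\<integral>\<omega>. h * indicator {\<omega>\<in>space M. Z \<omega> \<le> a} \<omega> \<partial>M)" for a
    using sets by simp
  show "h * measure M {\<omega>\<in>space M. Z \<omega> \<le> c}
      \<le> (\<integral>\<omega>. max (c + h) (Z \<omega>) \<partial>M) - (\<integral>\<omega>. max c (Z \<omega>) \<partial>M)"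
    unfolding diff indicator using Z h indicator_integrable by (intro integral_mono) (auto split: split_indicator)
  show "(\<integral>\<omega>. max (c + h) (Z \<omega>) \<partial>M) - (\<integral>\<omega>. max c (Z \<omega>) \<partial>M)
      \<le> h * measure M {\<omega>\<in>space M. Z \<omega> \<le> c + h}"
    unfolding diff indicator using Z h indicator_integrable by (intro integral_mono) (auto split: split_indicator)
qed

lemma (in prob_space) measure_le_eq_cdf_distr:
  "Z \<in> borel_measurable M \<Longrightarrow> measure M {\<omega>\<in>space M. Z \<omega> \<le> c} = cdf (distr M borel Z) c"
  by (simp add: cdf_def measure_distr vimage_def Int_def conj_commute)

lemma measure_le_mono_if_integral_max_eq:
  fixes Z :: "'a \<Rightarrow> real" and W :: "'b \<Rightarrow> real"
  assumes "prob_space M" "prob_space N" and Z: "integrable M Z" and W: "integrable N W"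
    and eq: "\<And>c. a < c \<Longrightarrow> (\<integral>\<omega>. max c (Z \<omega>) \<partial>M) = (\<integral>\<omega>. max c (W \<omega>) \<partial>N)"
    and "a < c"
  shows "measure M {\<omega>\<in>space M. Z \<omega> \<le> c} \<le> measure N {\<omega>\<in>space N. W \<omega> \<le> c}"
proof -
  interpret M: prob_space M by fact
  interpret N: prob_space N by fact
  have W_meas: "W \<in> borel_measurable N" using W by auto
  interpret F: real_distribution "distr N borel W"
    using W_meas by simp
  have "measure M {\<omega>\<in>space M. Z \<omega> \<le> c} \<le> cdf (distr N borel W) c'" if "c < c'" for c'
  proof -
    define h where "h = c' - c"
    have h: "0 < h" and c': "c' = c + h" using that by (auto simp: h_def)
    have "h * measure M {\<omega>\<in>space M. Z \<omega> \<le> c}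
        \<le> (\<integral>\<omega>. max (c + h) (Z \<omega>) \<partial>M) - (\<integral>\<omega>. max c (Z \<omega>) \<partial>M)"
      using Z h by (intro M.integral_max_increment_bounds) auto
    also have "\<dots> = (\<integral>\<omega>. max (c + h) (W \<omega>) \<partial>N) - (\<integral>\<omega>. max c (W \<omega>) \<partial>N)"
      using eq \<open>a < c\<close> h by simp
    also have "\<dots> \<le> h * measure N {\<omega>\<in>space N. W \<omega> \<le> c'}"
      unfolding c' using W h by (intro N.integral_max_increment_bounds) auto
    finally show ?thesis
      using h W_meas by (simp add: N.measure_le_eq_cdf_distr)
  qed
  then have "\<forall>\<^sub>F c' in at_right c. measure M {\<omega>\<in>space M. Z \<omega> \<le> c} \<le> cdf (distr N borel W) c'"
    by (rule eventually_mono[OF eventually_at_right_less])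
  then have "measure M {\<omega>\<in>space M. Z \<omega> \<le> c} \<le> cdf (distr N borel W) c"
    by (rule tendsto_lowerbound[OF F.cdf_is_right_cont[of c, unfolded continuous_within]])
      (rule trivial_limit_at_right_real)
  then show ?thesis
    using W_meas by (simp add: N.measure_le_eq_cdf_distr)
qed

lemma measure_le_eq_if_integral_max_eq:
  fixes Z :: "'a \<Rightarrow> real" and W :: "'b \<Rightarrow> real"
  assumes "prob_space M" "prob_space N" "integrable M Z" "integrable N W"
    and "\<And>c. a < c \<Longrightarrow> (\<integral>\<omega>. max c (Z \<omega>) \<partial>M) = (\<integral>\<omega>. max c (W \<omega>) \<partial>N)"
    and "a < c"
  shows "measure M {\<omega>\<in>space M. Z \<omega> \<le> c} = measure N {\<omega>\<in>space N. W \<omega> \<le> c}"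
  using measure_le_mono_if_integral_max_eq[of M N Z W a c]
    measure_le_mono_if_integral_max_eq[of N M W Z a c] assms
  by (simp add: order_antisym)

lemma integral_eq_if_measure_le_eq:
  fixes Z :: "'a \<Rightarrow> real" and W :: "'b \<Rightarrow> real"
  assumes "prob_space M" "prob_space N"
    and [measurable]: "Z \<in> borel_measurable M" "W \<in> borel_measurable N"
    and eq: "\<And>s. measure M {\<omega>\<in>space M. Z \<omega> \<le> s} = measure N {\<omega>\<in>space N. W \<omega> \<le> s}"
  shows "(\<integral>\<omega>. Z \<omega> \<partial>M) = (\<integral>\<omega>. W \<omega> \<partial>N)"
proof -
  interpret M: prob_space M by fact
  interpret N: prob_space N by fact
  have "distr M borel Z = distr N borel W"
    using eq by (intro cdf_unique ext) (simp_all add: M.measure_le_eq_cdf_distr N.measure_le_eq_cdf_distr)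
  then have "(\<integral>z. z \<partial>distr M borel Z) = (\<integral>z. z \<partial>distr N borel W)"
    by simp
  then show ?thesis
    by (simp add: integral_distr)
qed

lemma orthant_event_eq_weighted_max_le:
  assumes "d \<ge> 1" and pos: "\<And>i. i \<in> {1..d} \<Longrightarrow> 0 < t i"
  shows "orthant_event M X d t = {\<omega>\<in>space M. weighted_max X d (\<lambda>i. inverse (t i)) \<omega> \<le> 1}"
proof -
  have "\<bar>inverse (t i)\<bar> * X i \<omega> \<le> 1 \<longleftrightarrow> X i \<omega> \<le> t i" if "i \<in> {1..d}" for i \<omega>
    using pos[OF that] by (simp add: field_simps)
  then show ?thesis
    using assms(1) by (auto simp: orthant_event_def weighted_max_le_iff)
qed

lemma joint_cdf_eq_on_positive_if_normX_eq:
  assumes d: "d \<ge> 1" and "prob_space M" "prob_space N"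
    and HX: "cond_H M X d" and HY: "cond_H N Y d"
    and eq: "\<And>x. normX M X d x = normX N Y d x"
    and pos: "\<And>i. i \<in> {1..d} \<Longrightarrow> 0 < t i"
  shows "joint_cdf M X d t = joint_cdf N Y d t"
proof -
  let ?x = "\<lambda>i. inverse (t i)"
  have "(\<integral>\<omega>. max c (weighted_max X d ?x \<omega>) \<partial>M) = (\<integral>\<omega>. max c (weighted_max Y d ?x \<omega>) \<partial>N)"
    if "0 < c" for c
    using eq[of "?x(0 := c)"] that by (simp add: normX_eq_integral_weighted_max[OF d])
  then have "measure M {\<omega>\<in>space M. weighted_max X d ?x \<omega> \<le> 1}
      = measure N {\<omega>\<in>space N. weighted_max Y d ?x \<omega> \<le> 1}"
    using assms(2,3) d cond_H_integrable[OF HX] cond_H_integrable[OF HY]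
    by (intro measure_le_eq_if_integral_max_eq[where a = 0]) (auto intro: integrable_weighted_max)
  then show ?thesis
    using orthant_event_eq_weighted_max_le[OF d pos, where M = M and X = X]
      orthant_event_eq_weighted_max_le[OF d pos, where M = N and X = Y]
    by (simp add: joint_cdf_eq_measure_orthant_event)
qed

lemma joint_cdf_eq_if_eq_on_positive:
  assumes "prob_space M" "prob_space N" and HX: "cond_H M X d" and HY: "cond_H N Y d"
    and eq_pos: "\<And>t. (\<And>i. i \<in> {1..d} \<Longrightarrow> 0 < t i) \<Longrightarrow> joint_cdf M X d t = joint_cdf N Y d t"
  shows "joint_cdf M X d t = joint_cdf N Y d t"
proof (cases "\<exists>i\<in>{1..d}. t i < 0")
  case True
  then show ?thesis
    using joint_cdf_eq_0_if_negative cond_H_AE_nonneg[OF HX] cond_H_AE_nonneg[OF HY] by metis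
next
  case False
  interpret M: prob_space M by fact
  interpret N: prob_space N by fact
  define s where "s n = (\<lambda>i. t i + inverse (real (Suc n)))" for n
  have dec: "s (Suc n) i \<le> s n i" for n i
    by (simp add: s_def le_imp_inverse_le)
  have lim: "(\<lambda>n. s n i) \<longlonglongrightarrow> t i" for i
    using tendsto_add[OF tendsto_const LIMSEQ_inverse_real_of_nat] by (simp add: s_def)
  have "joint_cdf M X d (s n) = joint_cdf N Y d (s n)" for n
    using False by (intro eq_pos) (auto simp: s_def not_less add_nonneg_pos)
  moreover have "(\<lambda>n. joint_cdf M X d (s n)) \<longlonglongrightarrow> joint_cdf M X d t"
    using cond_H_measurable[OF HX] dec lim by (rule M.joint_cdf_continuous_from_above)
  moreover have "(\<lambda>n. joint_cdf N Y d (s n)) \<longlonglongrightarrow> joint_cdf N Y d t"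
    using cond_H_measurable[OF HY] dec lim by (rule N.joint_cdf_continuous_from_above)
  ultimately show ?thesis
    using LIMSEQ_unique by simp
qed

(* A coordinate with x i = 0 does not constrain the weighted maximum, so its threshold is sent
   to infinity. *)
lemma Union_orthant_event_eq_weighted_max_le:
  fixes x :: "nat \<Rightarrow> real" and s :: real
  assumes d: "d \<ge> 1" and s: "0 \<le> s"
  defines "t n \<equiv> (\<lambda>i. if x i = 0 then real n else s / \<bar>x i\<bar>)"
  shows "(\<Union>n. orthant_event M X d (t n)) = {\<omega>\<in>space M. weighted_max X d x \<omega> \<le> s}"
proof (intro equalityI subsetI)
  fix \<omega> assume "\<omega> \<in> (\<Union>n. orthant_event M X d (t n))"
  then obtain n where "\<omega> \<in> orthant_event M X d (t n)"
    by blast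
  then have "\<omega> \<in> space M" and le: "\<And>i. i \<in> {1..d} \<Longrightarrow> X i \<omega> \<le> t n i"
    by (auto simp: orthant_event_def)
  moreover have "\<bar>x i\<bar> * X i \<omega> \<le> s" if "i \<in> {1..d}" for i
    using le[OF that] s by (cases "x i = 0") (auto simp: t_def field_simps)
  ultimately show "\<omega> \<in> {\<omega>\<in>space M. weighted_max X d x \<omega> \<le> s}"
    by (simp add: weighted_max_le_iff[OF d])
next
  fix \<omega> assume "\<omega> \<in> {\<omega>\<in>space M. weighted_max X d x \<omega> \<le> s}"
  then have "\<omega> \<in> space M" and le: "\<And>i. i \<in> {1..d} \<Longrightarrow> \<bar>x i\<bar> * X i \<omega> \<le> s"
    by (auto simp: weighted_max_le_iff[OF d])
  obtain n where n: "(\<Sum>i\<in>{1..d}. \<bar>X i \<omega>\<bar>) \<le> real n"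
    using real_arch_simple by blast
  have "X i \<omega> \<le> t n i" if i: "i \<in> {1..d}" for i
  proof (cases "x i = 0")
    case True
    have "X i \<omega> \<le> \<bar>X i \<omega>\<bar>"
      by simp
    also have "\<dots> \<le> (\<Sum>i\<in>{1..d}. \<bar>X i \<omega>\<bar>)"
      using i by (intro member_le_sum) auto
    finally have "X i \<omega> \<le> (\<Sum>i\<in>{1..d}. \<bar>X i \<omega>\<bar>)" .
    then show ?thesis using n True by (simp add: t_def)
  next
    case False
    then show ?thesis using le[OF i] by (simp add: t_def field_simps)
  qed
  with \<open>\<omega> \<in> space M\<close> have "\<omega> \<in> orthant_event M X d (t n)"
    by (simp add: orthant_event_def)
  then show "\<omega> \<in> (\<Union>n. orthant_event M X d (t n))"
    by blast
qed

lemma (in finite_measure) joint_cdf_tendsto_measure_weighted_max_le: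
  assumes meas: "\<And>i. i \<in> {1..d} \<Longrightarrow> X i \<in> borel_measurable M" and d: "d \<ge> 1" and s: "0 \<le> s"
  shows "(\<lambda>n. joint_cdf M X d (\<lambda>i. if x i = 0 then real n else s / \<bar>x i\<bar>))
           \<longlonglongrightarrow> measure M {\<omega>\<in>space M. weighted_max X d x \<omega> \<le> s}"
proof -
  define t where "t n = (\<lambda>i. if x i = 0 then real n else s / \<bar>x i\<bar>)" for n :: nat
  have "(\<lambda>n. measure M (orthant_event M X d (t n)))
      \<longlonglongrightarrow> measure M (\<Union>n. orthant_event M X d (t n))"
    using meas by (intro finite_Lim_measure_incseq incseq_SucI orthant_event_mono)
      (auto simp: t_def intro: orthant_event_in_sets)
  then show ?thesis
    using Union_orthant_event_eq_weighted_max_le[OF d s, where x = x and M = M and X = X]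
    by (simp add: joint_cdf_eq_measure_orthant_event t_def)
qed

lemma normX_eq_if_joint_cdf_eq:
  assumes d: "d \<ge> 1" and "prob_space M" "prob_space N"
    and HX: "cond_H M X d" and HY: "cond_H N Y d"
    and eq: "\<And>t. joint_cdf M X d t = joint_cdf N Y d t"
  shows "normX M X d x = normX N Y d x"
proof -
  interpret M: prob_space M by fact
  interpret N: prob_space N by fact
  have measX: "\<And>i. i \<in> {1..d} \<Longrightarrow> X i \<in> borel_measurable M"
    and measY: "\<And>i. i \<in> {1..d} \<Longrightarrow> Y i \<in> borel_measurable N"
    using cond_H_measurable[OF HX] cond_H_measurable[OF HY] by auto
  have [measurable]: "weighted_max X d x \<in> borel_measurable M" "weighted_max Y d x \<in> borel_measurable N"
    using measX measY by (auto intro: borel_measurable_weighted_max)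
  have "measure M {\<omega>\<in>space M. max \<bar>x 0\<bar> (weighted_max X d x \<omega>) \<le> s}
      = measure N {\<omega>\<in>space N. max \<bar>x 0\<bar> (weighted_max Y d x \<omega>) \<le> s}" for s
  proof (cases "\<bar>x 0\<bar> \<le> s")
    case True
    then have "0 \<le> s" by linarith
    have "measure M {\<omega>\<in>space M. weighted_max X d x \<omega> \<le> s}
        = measure N {\<omega>\<in>space N. weighted_max Y d x \<omega> \<le> s}"
      using M.joint_cdf_tendsto_measure_weighted_max_le[where X = X and x = x, OF measX d \<open>0 \<le> s\<close>]
        N.joint_cdf_tendsto_measure_weighted_max_le[where X = Y and x = x, OF measY d \<open>0 \<le> s\<close>]
      by (simp add: eq LIMSEQ_unique)
    then show ?thesis
      using True by simp
  qed simp
  then show ?thesis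
    by (simp add: normX_eq_integral_weighted_max[OF d] integral_eq_if_measure_le_eq[OF assms(2,3)])
qed

theorem theorem2p2:
  fixes M :: "'a measure" and N :: "'b measure"
    and X :: "nat \<Rightarrow> 'a \<Rightarrow> real" and Y :: "nat \<Rightarrow> 'b \<Rightarrow> real" and d :: nat
  assumes "d \<ge> 1"
    and "prob_space M" and "prob_space N"
    and "cond_H M X d" and "cond_H N Y d"
  shows "(\<forall>t. joint_cdf M X d t = joint_cdf N Y d t) \<longleftrightarrow>
         (\<forall>x. normX M X d x = normX N Y d x)"
  using normX_eq_if_joint_cdf_eq[OF assms]
    joint_cdf_eq_if_eq_on_positive[OF assms(2-5) joint_cdf_eq_on_positive_if_normX_eq[OF assms]]
  by blast

end
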